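(* Let a total cost $N_{tot}\in\mathbb{N}$ be fixed. Under the assumption stated in the context (independent Monte-Carlo estimators $\widehat W_u=\frac1{N_u}\sum_{n=1}^{N_u}\widehat W_u^{(n)}$ of cost $\kappa N_u$), if the Shapley effects are estimated with the subset $W$-aggregation procedure, the solution of the relaxed program $$\min_{(N_u)_{\emptyset\subsetneq u\subsetneq[1:p]}\in(0,+\infty)^{2^p-2}}\sum_{i=1}^p\mathrm{Var}(\widehat\eta_i)\quad\text{subject to}\quad\kappa\sum_{\emptyset\subsetneq u\subsetneq[1:p]}N_u=N_{tot}$$ is $(N_u^* )_{\emptyset\subsetneq u\subsetneq[1:p]}$ with, for all $\emptyset\subsetneq u\subsetneq[1:p]$, $$N_u^*=\frac{N_{tot}}{\kappa}\,\frac{\sqrt{(p-|u|)!\,|u|!\,(p-|u|-1)!\,(|u|-1)!\,\mathrm{Var}(\widehat W_u^{(1)})}}{\sum_{\emptyset\subsetneq v\subsetneq[1:p]}\sqrt{(p-|v|)!\,|v|!\,(p-|v|-1)!\,(|v|-1)!\,\mathrm{Var}(\widehat W_v^{(1)})}}.$$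
   Context: Setting: $\mathbf{X}=(X_1,\dots,X_p)$, $Y=f(\mathbf{X})$ with $f\in L^2(\mathbb{P}_\mathbf{X})$. For $u\subset[1:p]$, $W_u$ denotes either $V_u=\mathrm{Var}(\mathrm{E}(Y|\mathbf{X}_u))$ for all $u$ or $E_u=\mathrm{E}(\mathrm{Var}(Y|\mathbf{X}_{-u}))$ for all $u$, with $-u=[1:p]\setminus u$; $W_\emptyset=0$, $W_{[1:p]}=\mathrm{Var}(Y)$ are taken as known. The Shapley effects are $\eta_i=\frac{1}{p\mathrm{Var}(Y)}\sum_{u\subset -i}\binom{p-1}{|u|}^{-1}(W_{u\cup\{i\}}-W_u)$. Assumption: for all $\emptyset\subsetneq u\subsetneq[1:p]$, $\widehat W_u$ is computed with cost $\kappa N_u$ (number of evaluations of $f$) as $\widehat W_u=\frac1{N_u}\sum_{n=1}^{N_u}\widehat W_u^{(n)}$ with $(\widehat W_u^{(n)})_n$ i.i.d., and the $(\widehat W_u)_u$ are independent; $\kappa\in\mathbb{N}^*$. Subset $W$-aggregation procedure: compute $\widehat W_u$ once for every $u$ (with $\widehat W_\emptyset=0$, $\widehat W_{[1:p]}=\mathrm{Var}(Y)$) and set $\widehat\eta_i=\frac{1}{p\mathrm{Var}(Y)}\sum_{u\subset -i}\binom{p-1}{|u|}^{-1}(\widehat W_{u\cup\{i\}}-\widehat W_u)$ for all $i$. *)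

theory Defs
  imports Complex_Main
begin

definition proper_subsets :: "nat \<Rightarrow> nat set set" where
  "proper_subsets p = {u. u \<subseteq> {1..p} \<and> u \<noteq> {} \<and> u \<noteq> {1..p}}"

text \<open>Subset W-aggregation procedure: given the (estimated) values What u for all
  subsets u, the estimate of the i-th Shapley effect.  VY is Var(Y).\<close>

definition shapley_W_aggregation :: "nat \<Rightarrow> real \<Rightarrow> (nat set \<Rightarrow> real) \<Rightarrow> nat \<Rightarrow> real" where
  "shapley_W_aggregation p VY What i =
     1 / (real p * VY) *
     (\<Sum>u\<in>Pow ({1..p} - {i}).
        (1 / real ((p - 1) choose card u)) * (What (insert i u) - What u))"

text \<open>The estimator is an affine function of
  the independent estimators What u (u proper nonempty) -- What {} = 0 and
  What [1:p] = Var(Y) being deterministic -- and Var(What u) = sigma u / N u, where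
  sigma u = Var(What_u^(1)).  Hence the variance of eta_i is the sum of the squared
  coefficients (obtained by evaluating the linear part on indicator vectors)
  times the variances.  This formula also defines the relaxed objective for real N u.\<close>

definition var_eta_hat ::
  "nat \<Rightarrow> real \<Rightarrow> (nat set \<Rightarrow> real) \<Rightarrow> (nat set \<Rightarrow> real) \<Rightarrow> nat \<Rightarrow> real" where
  "var_eta_hat p VY sigma N i =
     (\<Sum>u\<in>proper_subsets p.
        (shapley_W_aggregation p VY (\<lambda>v. if v = u then 1 else 0) i)\<^sup>2 * (sigma u / N u))"

definition total_var_eta_hat ::
  "nat \<Rightarrow> real \<Rightarrow> (nat set \<Rightarrow> real) \<Rightarrow> (nat set \<Rightarrow> real) \<Rightarrow> real" where
  "total_var_eta_hat p VY sigma N = (\<Sum>i\<in>{1..p}. var_eta_hat p VY sigma N i)"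

definition feasible_alloc :: "nat \<Rightarrow> nat \<Rightarrow> nat \<Rightarrow> (nat set \<Rightarrow> real) \<Rightarrow> bool" where
  "feasible_alloc p \<kappa> Ntot N \<longleftrightarrow>
     (\<forall>u\<in>proper_subsets p. 0 < N u) \<and>
     real \<kappa> * (\<Sum>u\<in>proper_subsets p. N u) = real Ntot"

definition opt_weight :: "nat \<Rightarrow> (nat set \<Rightarrow> real) \<Rightarrow> nat set \<Rightarrow> real" where
  "opt_weight p sigma u =
     sqrt (fact (p - card u) * fact (card u) * fact (p - card u - 1) * fact (card u - 1) * sigma u)"

definition N_opt :: "nat \<Rightarrow> nat \<Rightarrow> nat \<Rightarrow> (nat set \<Rightarrow> real) \<Rightarrow> nat set \<Rightarrow> real" where
  "N_opt p \<kappa> Ntot sigma u =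
     real Ntot / real \<kappa> *
     (opt_weight p sigma u / (\<Sum>v\<in>proper_subsets p. opt_weight p sigma v))"

end

theory Submission
  imports Defs
begin

text \<open>The estimator of \<open>\<eta>\<^sub>i\<close> is affine in the independent \<open>W\<^sub>u\<close>, which enter it with
  coefficient \<open>C(p-1,|u|-1)\<^sup>-\<^sup>1/(p Var Y)\<close> if \<open>i \<in> u\<close> and \<open>-C(p-1,|u|)\<^sup>-\<^sup>1/(p Var Y)\<close>
  otherwise.  Summing the squared coefficients over \<open>i\<close> gives
  \<open>|u| C(p-1,|u|-1)\<^sup>-\<^sup>2 + (p-|u|) C(p-1,|u|)\<^sup>-\<^sup>2 = p (p-|u|)! |u|! (p-|u|-1)! (|u|-1)! / (p-1)!\<^sup>2\<close>,
  so the total variance is a positive multiple of \<open>\<Sum>\<^sub>u w\<^sub>u\<^sup>2 / N\<^sub>u\<close>, with \<open>w\<^sub>u\<close> the square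
  root in the numerator of \<open>N\<^sub>u\<^sup>*\<close>.  Under the budget \<open>\<Sum>\<^sub>u N\<^sub>u = S\<close>, Cauchy-Schwarz gives
  \<open>\<Sum>\<^sub>u w\<^sub>u\<^sup>2 / N\<^sub>u \<ge> (\<Sum>\<^sub>u w\<^sub>u)\<^sup>2 / S\<close>, with equality exactly when \<open>N\<close> is proportional to \<open>w\<close>.\<close>

lemma sum_power2_divide_decomp:
  fixes w N :: "'a \<Rightarrow> real"
  assumes "\<forall>u\<in>A. N u \<noteq> 0" and "sum N A = S" and "S \<noteq> 0"
  shows "(\<Sum>u\<in>A. (w u)\<^sup>2 / N u) =
    (sum w A)\<^sup>2 / S + (\<Sum>u\<in>A. (w u - sum w A / S * N u)\<^sup>2 / N u)"
proof -
  define t where "t = sum w A / S"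
  have "(\<Sum>u\<in>A. (w u - t * N u)\<^sup>2 / N u) = (\<Sum>u\<in>A. (w u)\<^sup>2 / N u - 2 * t * w u + t\<^sup>2 * N u)"
    using assms(1) by (intro sum.cong) (auto simp: power2_eq_square field_simps)
  also have "\<dots> = (\<Sum>u\<in>A. (w u)\<^sup>2 / N u) - 2 * t * sum w A + t\<^sup>2 * S"
    by (simp add: sum.distrib sum_subtractf sum_distrib_left[symmetric] assms(2))
  also have "\<dots> = (\<Sum>u\<in>A. (w u)\<^sup>2 / N u) - (sum w A)\<^sup>2 / S"
    using assms(3) by (simp add: t_def power2_eq_square field_simps)
  finally show ?thesis by (simp add: t_def)
qed

lemma optimal_allocation:
  fixes w :: "'a \<Rightarrow> real"
  assumes A: "finite A" "A \<noteq> {}" and w: "\<forall>u\<in>A. 0 < w u" and S: "0 < S"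
  defines "N\<^sub>o\<^sub>p\<^sub>t \<equiv> \<lambda>u. S * w u / sum w A"
  shows "(\<forall>u\<in>A. 0 < N\<^sub>o\<^sub>p\<^sub>t u) \<and> sum N\<^sub>o\<^sub>p\<^sub>t A = S"
    and "\<lbrakk>\<forall>u\<in>A. 0 < N u; sum N A = S\<rbrakk> \<Longrightarrow>
      (\<Sum>u\<in>A. (w u)\<^sup>2 / N\<^sub>o\<^sub>p\<^sub>t u) \<le> (\<Sum>u\<in>A. (w u)\<^sup>2 / N u)"
    and "\<lbrakk>\<forall>u\<in>A. 0 < N u; sum N A = S; (\<Sum>u\<in>A. (w u)\<^sup>2 / N u) \<le> (\<Sum>u\<in>A. (w u)\<^sup>2 / N\<^sub>o\<^sub>p\<^sub>t u)\<rbrakk>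
      \<Longrightarrow> \<forall>u\<in>A. N u = N\<^sub>o\<^sub>p\<^sub>t u"
proof -
  define W where "W = sum w A"
  have W: "0 < W" unfolding W_def using A w by (intro sum_pos) auto
  have Nopt: "N\<^sub>o\<^sub>p\<^sub>t u = S * w u / W" for u by (simp add: N\<^sub>o\<^sub>p\<^sub>t_def W_def)
  have "sum N\<^sub>o\<^sub>p\<^sub>t A = S / W * W"
    unfolding Nopt W_def by (simp add: sum_divide_distrib[symmetric] sum_distrib_left[symmetric])
  then show opt: "(\<forall>u\<in>A. 0 < N\<^sub>o\<^sub>p\<^sub>t u) \<and> sum N\<^sub>o\<^sub>p\<^sub>t A = S"
    using w S W by (simp add: Nopt)
  have "(\<Sum>u\<in>A. (w u)\<^sup>2 / N\<^sub>o\<^sub>p\<^sub>t u) =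
      W\<^sup>2 / S + (\<Sum>u\<in>A. (w u - W / S * N\<^sub>o\<^sub>p\<^sub>t u)\<^sup>2 / N\<^sub>o\<^sub>p\<^sub>t u)"
    unfolding W_def using opt S by (intro sum_power2_divide_decomp) auto
  also have "(\<Sum>u\<in>A. (w u - W / S * N\<^sub>o\<^sub>p\<^sub>t u)\<^sup>2 / N\<^sub>o\<^sub>p\<^sub>t u) = 0"
    using S W by (simp add: Nopt)
  finally have min: "(\<Sum>u\<in>A. (w u)\<^sup>2 / N\<^sub>o\<^sub>p\<^sub>t u) = W\<^sup>2 / S" by simp
  assume N: "\<forall>u\<in>A. 0 < N u" "sum N A = S"
  define d where "d u = (w u - W / S * N u)\<^sup>2 / N u" for u
  have nonneg: "0 \<le> d u" if "u \<in> A" for u using N(1) that by (simp add: d_def less_imp_le)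
  then have "0 \<le> sum d A" by (rule sum_nonneg)
  have decomp: "(\<Sum>u\<in>A. (w u)\<^sup>2 / N u) = (\<Sum>u\<in>A. (w u)\<^sup>2 / N\<^sub>o\<^sub>p\<^sub>t u) + sum d A"
    unfolding min d_def W_def using N S by (intro sum_power2_divide_decomp) auto
  with \<open>0 \<le> sum d A\<close> show "(\<Sum>u\<in>A. (w u)\<^sup>2 / N\<^sub>o\<^sub>p\<^sub>t u) \<le> (\<Sum>u\<in>A. (w u)\<^sup>2 / N u)"
    by linarith
  assume "(\<Sum>u\<in>A. (w u)\<^sup>2 / N u) \<le> (\<Sum>u\<in>A. (w u)\<^sup>2 / N\<^sub>o\<^sub>p\<^sub>t u)"
  with decomp \<open>0 \<le> sum d A\<close> have "sum d A = 0" by linarith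
  then have d0: "\<forall>u\<in>A. d u = 0" using sum_nonneg_eq_0_iff[OF A(1) nonneg] by simp
  show "\<forall>u\<in>A. N u = N\<^sub>o\<^sub>p\<^sub>t u"
  proof
    fix u assume u: "u \<in> A"
    with d0 N(1) have "d u = 0" "N u \<noteq> 0" by auto
    then have "w u = W / S * N u" by (simp add: d_def)
    with S W show "N u = N\<^sub>o\<^sub>p\<^sub>t u" by (simp add: Nopt field_simps)
  qed
qed

lemma inverse_binomial_sq_sum:
  assumes "0 < k" "k < n"
  shows "real k * (1 / real ((n - 1) choose (k - 1)))\<^sup>2 + real (n - k) * (1 / real ((n - 1) choose k))\<^sup>2
    = real n * (fact (n - k) * fact k * fact (n - k - 1) * fact (k - 1)) / (fact (n - 1))\<^sup>2"
proof -
  have c1: "1 / real ((n - 1) choose (k - 1)) = fact (k - 1) * fact (n - k) / fact (n - 1)"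
    using assms by (simp add: binomial_fact)
  have c2: "1 / real ((n - 1) choose k) = fact k * fact (n - k - 1) / fact (n - 1)"
    using assms by (simp add: binomial_fact diff_commute)
  have fk: "(fact k :: real) = real k * fact (k - 1)"
    using assms(1) by (simp add: fact_reduce)
  have fnk: "(fact (n - k) :: real) = real (n - k) * fact (n - k - 1)"
    using assms(2) by (simp add: fact_reduce)
  have n: "real n = real k + real (n - k)" using assms(2) by simp
  have identity: "x * (a * (y * b) / F)\<^sup>2 + y * (x * a * b / F)\<^sup>2 = (x + y) * (y * b * (x * a) * b * a) / F\<^sup>2"
    if "F \<noteq> 0" for x y a b F :: real
    using that by (simp add: field_simps power2_eq_square)
  show ?thesis unfolding c1 c2 fk fnk n by (rule identity) simp
qed

lemma finite_proper_subsets: "finite (proper_subsets p)"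
  unfolding proper_subsets_def by (rule finite_subset[of _ "Pow {1..p}"]) auto

lemma proper_subsets_nonempty:
  assumes "2 \<le> p" shows "proper_subsets p \<noteq> {}"
proof -
  have "{1} \<noteq> {1..p}"
  proof
    assume "{1} = {1..p}"
    with assms have "(2::nat) \<in> {1}" by simp
    then show False by simp
  qed
  then have "{1} \<in> proper_subsets p" using assms by (simp add: proper_subsets_def)
  then show ?thesis by auto
qed

lemma proper_subsetsD:
  assumes "u \<in> proper_subsets p"
  shows "finite u" and "0 < card u" and "card u < p"
proof -
  have u: "u \<subset> {1..p}" "u \<noteq> {}" using assms by (auto simp: proper_subsets_def)
  show "finite u" using u(1) finite_subset by auto
  then show "0 < card u" using u(2) by (simp add: card_gt_0_iff)
  show "card u < p" using psubset_card_mono[OF _ u(1)] by simp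
qed

lemma shapley_W_aggregation_indicator:
  assumes u: "u \<subseteq> {1..p}"
  shows "shapley_W_aggregation p VY (\<lambda>v. if v = u then 1 else 0) i =
    (if i \<in> u then 1 / real ((p - 1) choose (card u - 1))
     else - (1 / real ((p - 1) choose card u))) / (real p * VY)"
proof -
  define c where "c v = 1 / real ((p - 1) choose card v)" for v :: "nat set"
  define P where "P = Pow ({1..p} - {i})"
  have "shapley_W_aggregation p VY (\<lambda>v. if v = u then 1 else 0) i =
      1 / (real p * VY) * (\<Sum>v\<in>P. c v * ((if insert i v = u then 1 else 0) - (if v = u then 1 else 0)))"
    unfolding shapley_W_aggregation_def c_def P_def ..
  also have "(\<Sum>v\<in>P. c v * ((if insert i v = u then 1 else 0) - (if v = u then 1 else 0)))
      = (if i \<in> u then c (u - {i}) else - c u)"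
  proof (cases "i \<in> u")
    case True
    have "(insert i v = u) = (v = u - {i})" "v \<noteq> u" if "v \<in> P" for v
      using True that by (auto simp: P_def)
    then have "(\<Sum>v\<in>P. c v * ((if insert i v = u then 1 else 0) - (if v = u then 1 else 0)))
        = (\<Sum>v\<in>P. if v = u - {i} then c v else 0)"
      by (intro sum.cong) simp_all
    also have "\<dots> = c (u - {i})" using True u by (auto simp: sum.delta P_def)
    finally show ?thesis using True by simp
  next
    case False
    then have "insert i v \<noteq> u" for v by auto
    then have "(\<Sum>v\<in>P. c v * ((if insert i v = u then 1 else 0) - (if v = u then 1 else 0)))
        = (\<Sum>v\<in>P. if v = u then - c v else 0)"
      by (intro sum.cong) auto
    also have "\<dots> = - c u" using False u by (simp add: sum.delta P_def subset_Diff_insert)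
    finally show ?thesis using False by simp
  qed
  also have "i \<in> u \<Longrightarrow> card (u - {i}) = card u - 1"
    using u finite_subset by (simp add: card_Diff_singleton)
  then have "(if i \<in> u then c (u - {i}) else - c u) =
      (if i \<in> u then 1 / real ((p - 1) choose (card u - 1)) else - (1 / real ((p - 1) choose card u)))"
    by (simp add: c_def)
  finally show ?thesis by simp
qed

lemma sum_shapley_W_aggregation_indicator_sq:
  assumes u: "u \<in> proper_subsets p"
  shows "(\<Sum>i\<in>{1..p}. (shapley_W_aggregation p VY (\<lambda>v. if v = u then 1 else 0) i)\<^sup>2) =
    fact (p - card u) * fact (card u) * fact (p - card u - 1) * fact (card u - 1)
      / (real p * (VY * fact (p - 1))\<^sup>2)"
proof -
  define a where "a = (1 / real ((p - 1) choose (card u - 1)))\<^sup>2"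
  define b where "b = (1 / real ((p - 1) choose card u))\<^sup>2"
  define P :: real
    where "P = fact (p - card u) * fact (card u) * fact (p - card u - 1) * fact (card u - 1)"
  have sub: "u \<subseteq> {1..p}" using u by (simp add: proper_subsets_def)
  have "(shapley_W_aggregation p VY (\<lambda>v. if v = u then 1 else 0) i)\<^sup>2 =
      (if i \<in> u then a else b) / (real p * VY)\<^sup>2" for i
    by (simp add: shapley_W_aggregation_indicator[OF sub] a_def b_def power_divide)
  then have "(\<Sum>i\<in>{1..p}. (shapley_W_aggregation p VY (\<lambda>v. if v = u then 1 else 0) i)\<^sup>2)
      = (\<Sum>i\<in>{1..p}. if i \<in> u then a else b) / (real p * VY)\<^sup>2"
    unfolding sum_divide_distrib by simp
  also have "(\<Sum>i\<in>{1..p}. if i \<in> u then a else b) = real (card u) * a + real (p - card u) * b"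
  proof -
    have "card ({1..p} - u) = p - card u"
      using sub proper_subsetsD(1)[OF u] by (simp add: card_Diff_subset)
    moreover have "{1..p} \<inter> u = u" "{1..p} \<inter> - u = {1..p} - u" using sub by auto
    ultimately show ?thesis by (simp add: sum.If_cases)
  qed
  also have "\<dots> = real p * P / (fact (p - 1))\<^sup>2"
    unfolding a_def b_def P_def using proper_subsetsD(2,3)[OF u] by (rule inverse_binomial_sq_sum)
  also have "real p * P / (fact (p - 1))\<^sup>2 / (real p * VY)\<^sup>2 = P / (real p * (VY * fact (p - 1))\<^sup>2)"
    using proper_subsetsD(3)[OF u] by (simp add: power_mult_distrib power2_eq_square)
  finally show ?thesis unfolding P_def .
qed

lemma total_var_eta_hat_eq:
  assumes "\<forall>u\<in>proper_subsets p. 0 \<le> sigma u"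
  shows "total_var_eta_hat p VY sigma N =
    1 / (real p * (VY * fact (p - 1))\<^sup>2) * (\<Sum>u\<in>proper_subsets p. (opt_weight p sigma u)\<^sup>2 / N u)"
proof -
  define D where "D = real p * (VY * fact (p - 1))\<^sup>2"
  have "total_var_eta_hat p VY sigma N = (\<Sum>u\<in>proper_subsets p.
      (\<Sum>i\<in>{1..p}. (shapley_W_aggregation p VY (\<lambda>v. if v = u then 1 else 0) i)\<^sup>2) * (sigma u / N u))"
    unfolding total_var_eta_hat_def var_eta_hat_def sum_distrib_right by (rule sum.swap)
  also have "\<dots> = (\<Sum>u\<in>proper_subsets p. 1 / D * ((opt_weight p sigma u)\<^sup>2 / N u))"
  proof (rule sum.cong[OF refl])
    fix u assume u: "u \<in> proper_subsets p"
    define P :: real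
      where "P = fact (p - card u) * fact (card u) * fact (p - card u - 1) * fact (card u - 1)"
    have "(opt_weight p sigma u)\<^sup>2 = P * sigma u"
      using assms u by (simp add: opt_weight_def P_def)
    then show "(\<Sum>i\<in>{1..p}. (shapley_W_aggregation p VY (\<lambda>v. if v = u then 1 else 0) i)\<^sup>2)
        * (sigma u / N u) = 1 / D * ((opt_weight p sigma u)\<^sup>2 / N u)"
      unfolding sum_shapley_W_aggregation_indicator_sq[OF u] P_def[symmetric] D_def[symmetric] by simp
  qed
  finally show ?thesis unfolding D_def sum_distrib_left .
qed

theorem proposition3:
  fixes p \<kappa> Ntot :: nat and VY :: real and sigma :: "nat set \<Rightarrow> real"
  assumes "2 \<le> p" and "1 \<le> \<kappa>" and "0 < Ntot" and "0 < VY"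
    and "\<forall>u\<in>proper_subsets p. 0 < sigma u"
  shows "feasible_alloc p \<kappa> Ntot (N_opt p \<kappa> Ntot sigma)
    \<and> (\<forall>N. feasible_alloc p \<kappa> Ntot N \<longrightarrow>
          total_var_eta_hat p VY sigma (N_opt p \<kappa> Ntot sigma) \<le> total_var_eta_hat p VY sigma N)
    \<and> (\<forall>N. feasible_alloc p \<kappa> Ntot N \<longrightarrow>
          total_var_eta_hat p VY sigma N \<le> total_var_eta_hat p VY sigma (N_opt p \<kappa> Ntot sigma) \<longrightarrow>
          (\<forall>u\<in>proper_subsets p. N u = N_opt p \<kappa> Ntot sigma u))"
proof -
  define A where "A = proper_subsets p"
  define w where "w = opt_weight p sigma"
  define S where "S = real Ntot / real \<kappa>"
  define c where "c = 1 / (real p * (VY * fact (p - 1))\<^sup>2)"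
  have "0 < c" using assms(1,4) by (simp add: c_def)
  have total: "total_var_eta_hat p VY sigma N = c * (\<Sum>u\<in>A. (w u)\<^sup>2 / N u)" for N
    using assms(5) by (simp add: total_var_eta_hat_eq less_imp_le c_def A_def w_def)
  have feasible: "feasible_alloc p \<kappa> Ntot N \<longleftrightarrow> (\<forall>u\<in>A. 0 < N u) \<and> sum N A = S" for N
    using assms(2) by (auto simp: feasible_alloc_def A_def S_def field_simps)
  have N_opt: "N_opt p \<kappa> Ntot sigma = (\<lambda>u. S * w u / sum w A)"
    unfolding fun_eq_iff by (simp add: N_opt_def S_def w_def A_def)
  have w: "\<forall>u\<in>A. 0 < w u" using assms(5) by (simp add: A_def w_def opt_weight_def)
  have S: "0 < S" using assms(2,3) by (simp add: S_def)
  note opt = optimal_allocation[OF finite_proper_subsets proper_subsets_nonempty[OF assms(1)],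
      folded A_def, OF w S]
  show ?thesis
    unfolding feasible total N_opt A_def[symmetric] mult_le_cancel_left_pos[OF \<open>0 < c\<close>]
    by (intro conjI allI impI; (elim conjE)?;
        rule opt(1)[THEN conjunct1] opt(1)[THEN conjunct2] opt(2) opt(3); assumption)
qed

end
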